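(* If $s>0$ is small enough, there exist numbers $S_n,T_n$ and a point $z_0$ such that $R_n(1)=z_0$, $R_n(z_0)=1$ and $R_n'(1)R_n'(z_0)=1$ (so $\{1,z_0\}$ is a parabolic periodic orbit of period $2$ with multiplier $1$), and these can be chosen so that $\lim_{s\to0^+}S_n/s^\nu=\mu$, $\lim_{s\to0^+}T_n/s^\nu=(d_1d_n-1)\mu$ and $\lim_{s\to0^+}z_0/s^\nu=d_1d_n\mu$.
   Context: $n\ge3$ odd, $d_1,\dots,d_n$ positive integers with $\sum1/d_i<1$, $d_{\max}=\max_id_i$, $D_i=d_i+d_{i+1}$, $c_1=(d_{\max}^2s)^{1/d_1}$, $c_i=s^{1/d_i}c_{i-1}$ ($2\le i\le n-1$), $R_n(z)=\frac{S_n}{z^{d_n}}\prod_{i=1}^{n-1}(z^{D_i}-c_i^{D_i})^{(-1)^i}+T_n$, $\nu=\frac{d_n}{d_n-1}\sum_{i=1}^{n-1}\frac1{d_i}$, and $\mu=(d_1d_n)^{-d_n/(d_n-1)}d_{\max}^{2(d_n-d_1)/(d_1(d_n-1))}$. *)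

theory Defs
  imports "HOL-Analysis.Analysis"
begin

definition dmax :: "(nat \<Rightarrow> nat) \<Rightarrow> nat \<Rightarrow> nat" where
  "dmax d n = Max (d ` {1..n})"

text \<open>c_1 = (M^2 s)^(1/d_1), c_i = s^(1/d_i) c_(i-1); here M stands for d_max.
  The value at index 0 is unused.\<close>
fun cseq :: "(nat \<Rightarrow> nat) \<Rightarrow> nat \<Rightarrow> real \<Rightarrow> nat \<Rightarrow> real" where
  "cseq d M s 0 = 1"
| "cseq d M s (Suc 0) = (real M ^ 2 * s) powr (1 / real (d 1))"
| "cseq d M s (Suc (Suc k)) = s powr (1 / real (d (Suc (Suc k)))) * cseq d M s (Suc k)"

definition DD :: "(nat \<Rightarrow> nat) \<Rightarrow> nat \<Rightarrow> nat" where
  "DD d i = d i + d (Suc i)"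

definition Rn :: "(nat \<Rightarrow> nat) \<Rightarrow> nat \<Rightarrow> real \<Rightarrow> complex \<Rightarrow> complex \<Rightarrow> complex \<Rightarrow> complex" where
  "Rn d n s S T z =
     S / z ^ d n *
     (\<Prod>i\<in>{1..n-1}.
        (if even i then (z ^ DD d i - complex_of_real (cseq d (dmax d n) s i) ^ DD d i)
         else inverse (z ^ DD d i - complex_of_real (cseq d (dmax d n) s i) ^ DD d i)))
     + T"

definition nu_exp :: "(nat \<Rightarrow> nat) \<Rightarrow> nat \<Rightarrow> real" where
  "nu_exp d n = real (d n) / (real (d n) - 1) * (\<Sum>i=1..n-1. 1 / real (d i))"

definition mu_const :: "(nat \<Rightarrow> nat) \<Rightarrow> nat \<Rightarrow> real" where
  "mu_const d n = (real (d 1) * real (d n)) powr (- real (d n) / (real (d n) - 1))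
     * real (dmax d n) powr (2 * (real (d n) - real (d 1)) / (real (d 1) * (real (d n) - 1)))"

end

theory Submission
  imports Defs
begin

text \<open>
  On the positive real axis write \<open>R_n = S f + T\<close> with \<open>f(z) = P(z) / z^d_n\<close>, where \<open>P\<close> is the
  alternating product in \<open>R_n\<close>. The conditions \<open>R_n(1) = z_0\<close> and \<open>R_n(z_0) = 1\<close> force
  \<open>S = (1 - z_0) / (f(z_0) - f(1))\<close> and \<open>T = z_0 - S f(1)\<close>; since \<open>R_n' = S f' = S f L\<close> with \<open>L\<close>
  the logarithmic derivative of \<open>f\<close>, the multiplier condition then becomes \<open>G(z_0) = 0\<close> for
  \<open>G(z) = (1 - z)^2 f'(1) f'(z) - (f(z) - f(1))^2\<close>.

  Since \<open>c_i = m s^\<sigma>_i\<close> with \<open>\<sigma>_i = 1/d_1 + \<dots> + 1/d_i < \<nu>\<close>, on the scale \<open>z = x s^\<nu>\<close> every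
  \<open>z / c_i\<close> tends to \<open>0\<close>, and the exponents telescope so that \<open>z f(z) \<rightarrow> \<kappa> x^(1 - d_n)\<close>,
  \<open>z L(z) \<rightarrow> -d_n\<close>, \<open>f(1) \<rightarrow> 1\<close> and \<open>L(1) \<rightarrow> -d_1\<close> as \<open>s \<rightarrow> 0+\<close>. Hence
  \<open>G(x s^\<nu>) / f(x s^\<nu>)^2 \<rightarrow> d_1 d_n x^(d_n - 1) / \<kappa> - 1\<close>, which changes sign at
  \<open>a = d_1 d_n \<mu>\<close>. By the intermediate value theorem \<open>G(x s^\<nu>)\<close> has zeros \<open>x\<close> tending to \<open>a\<close>,
  and the asymptotics of \<open>S\<close> and \<open>T\<close> follow.
\<close>

lemma sum_alternating_pairs_telescope:
  fixes A :: "nat \<Rightarrow> 'a::comm_ring_1"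
  shows "(\<Sum>i\<in>{1..2*k}. (-1)^i * (A i + A (Suc i))) = A (2*k+1) - A 1"
proof (induction k)
  case 0
  then show ?case by simp
next
  case (Suc k)
  have "{1..2 * Suc k} = insert (2*k+2) (insert (2*k+1) {1..2*k})" by auto
  moreover have "(-1::'a)^(2*k+2) = 1" "(-1::'a)^(2*k+1) = -1" by (simp_all add: power_add)
  ultimately show ?case using Suc by (simp add: algebra_simps eval_nat_numeral)
qed

lemma sum_neg_one_power_even: "(\<Sum>i\<in>{1..2*k}. (-1::'a::comm_ring_1)^i) = 0"
proof (induction k)
  case 0
  then show ?case by simp
next
  case (Suc k)
  have "{1..2 * Suc k} = insert (2*k+2) (insert (2*k+1) {1..2*k})" by auto
  then show ?case using Suc by simp
qed

lemma tendsto_powr_at_right_0: "(p::real) > 0 \<Longrightarrow> ((\<lambda>s. s powr p) \<longlongrightarrow> 0) (at_right 0)"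
  by (rule tendsto_zero_powrI[OF tendsto_ident_at tendsto_const]) (auto simp: eventually_at_filter)

lemma tendsto_alternating_factor:
  fixes u :: "'b \<Rightarrow> 'a::real_normed_div_algebra"
  assumes u: "(u \<longlongrightarrow> l) F" and l: "l * l = 1"
  shows "((\<lambda>x. if even i then u x else inverse (u x)) \<longlongrightarrow> l) F"
proof -
  have "l \<noteq> 0" and "inverse l = l" using l by (auto intro: inverse_unique)
  then show ?thesis using tendsto_inverse[OF u] u by (cases "even i") simp_all
qed

lemma power_divide_fraction_eq:
  fixes z c :: "'a::field"
  assumes "c \<noteq> 0"
  shows "(z / c) ^ k / ((z / c) ^ k - 1) = z ^ k / (z ^ k - c ^ k)"
proof -
  have "(z / c) ^ k - 1 = (z ^ k - c ^ k) / c ^ k" using assms by (simp add: power_divide field_simps)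
  then show ?thesis using assms by (simp add: power_divide)
qed

lemma square_ratio_product_eq_one:
  fixes N D A B :: "'a::field"
  assumes "D \<noteq> 0" and "N^2 * A * B = D^2"
  shows "(N / D) * A * ((N / D) * B) = 1"
proof -
  have "(N / D) * A * ((N / D) * B) = (N^2 * A * B) / D^2"
    using assms(1) by (simp add: field_simps power2_eq_square)
  then show ?thesis using assms by simp
qed

lemma has_field_derivative_alternating_prod:
  fixes w :: "'a::real_normed_field"
  assumes "\<forall>i\<in>A. w ^ k i \<noteq> C i"
  shows "((\<lambda>w. \<Prod>i\<in>A. if even i then w ^ k i - C i else inverse (w ^ k i - C i))
    has_field_derivative
      (\<Prod>i\<in>A. if even i then w ^ k i - C i else inverse (w ^ k i - C i)) *
      (\<Sum>i\<in>A. (-1)^i * of_nat (k i) * w ^ (k i - 1) / (w ^ k i - C i))) (at w)"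
proof -
  define g where "g i = (\<lambda>w. if even i then w ^ k i - C i else inverse (w ^ k i - C i))" for i
  define g' where "g' i = (if even i then of_nat (k i) * w ^ (k i - 1)
       else - (of_nat (k i) * w ^ (k i - 1) * inverse ((w ^ k i - C i) ^ 2)))" for i
  have nz: "w ^ k i - C i \<noteq> 0" if "i \<in> A" for i using assms that by simp
  have deriv: "(g i has_field_derivative g' i) (at w)" if "i \<in> A" for i
  proof -
    have base: "((\<lambda>w. w ^ k i - C i) has_field_derivative of_nat (k i) * w ^ (k i - 1)) (at w)"
      by (auto intro!: derivative_eq_intros)
    show ?thesis
      using base DERIV_inverse_fun[OF base nz[OF that]]
      by (cases "even i") (simp_all add: g_def g'_def power2_eq_square inverse_mult_distrib)
  qed
  have quot: "g' i / g i w = (-1)^i * of_nat (k i) * w ^ (k i - 1) / (w ^ k i - C i)"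
    if "i \<in> A" for i
  proof (cases "even i")
    case False
    then have "g' i / g i w = - (of_nat (k i) * w ^ (k i - 1) * inverse ((w ^ k i - C i) ^ 2))
        / inverse (w ^ k i - C i)"
      by (simp add: g_def g'_def)
    also have "\<dots> = - (of_nat (k i) * w ^ (k i - 1)) / (w ^ k i - C i)"
      using nz[OF that] by (metis (no_types) nonzero_inverse_inverse_eq divide_inverse
        inverse_nonzero_iff_nonzero power2_eq_square inverse_mult_distrib mult.assoc
        right_inverse mult_1_right minus_mult_left)
    finally show ?thesis using False by simp
  qed (simp add: g_def g'_def)
  have "((\<lambda>w. \<Prod>i\<in>A. g i w) has_field_derivative
      (\<Prod>i\<in>A. g i w) * (\<Sum>i\<in>A. g' i / g i w)) (at w)"
    by (rule has_field_derivative_prod') (use nz deriv in \<open>auto simp: g_def\<close>)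
  moreover have "(\<Sum>i\<in>A. g' i / g i w) =
      (\<Sum>i\<in>A. (-1)^i * of_nat (k i) * w ^ (k i - 1) / (w ^ k i - C i))"
    using quot by (rule sum.cong[OF refl])
  ultimately show ?thesis by (simp add: g_def)
qed

locale parabolic_orbit_setup =
  fixes d :: "nat \<Rightarrow> nat" and n :: nat
  assumes n_ge_3: "n \<ge> 3" and odd_n: "odd n" and d_pos: "\<forall>i\<in>{1..n}. d i > 0"
    and sum_inverse_d_lt_1: "(\<Sum>i=1..n. 1 / real (d i)) < 1"
begin

definition "I = {1..n-1}"
definition "c s i = cseq d (dmax d n) s i"
definition "D i = real (DD d i)"
definition "dn = real (d n)"
definition "\<nu> = nu_exp d n"
definition "\<sigma> i = (\<Sum>j=1..i. 1 / real (d j))"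
definition "m = real (dmax d n) powr (2 / real (d 1))"

lemma d_ge_2: "i \<in> {1..n} \<Longrightarrow> d i \<ge> 2"
proof -
  assume i: "i \<in> {1..n}"
  have "1 / real (d i) \<le> (\<Sum>i=1..n. 1 / real (d i))"
    by (rule member_le_sum) (use i in auto)
  with sum_inverse_d_lt_1 have "1 / real (d i) < 1" by linarith
  moreover have "d i > 0" using d_pos i by auto
  ultimately show ?thesis by (auto simp: field_simps)
qed

lemma d_1_pos: "real (d 1) > 0" using d_ge_2[of 1] n_ge_3 by auto

lemma dn_ge_2: "dn \<ge> 2" using d_ge_2[of n] n_ge_3 by (simp add: dn_def)

lemma real_d_n_minus_1: "real (d n - 1) = dn - 1"
  using dn_ge_2 by (simp add: dn_def of_nat_diff)

lemma dmax_pos: "real (dmax d n) > 0"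
proof -
  have "d 1 \<le> dmax d n" unfolding dmax_def using n_ge_3 by (simp add: Max_ge_iff)
  then show ?thesis using d_1_pos by linarith
qed

lemma m_pos: "m > 0" using dmax_pos by (simp add: m_def)

lemma I_eq: "I = {1..2 * (n div 2)}"
  using odd_n by (simp add: I_def)

lemma I_bounds: "i \<in> I \<Longrightarrow> i \<in> {1..n} \<and> Suc i \<in> {1..n}" by (auto simp: I_def)

lemma card_I_even: "even (card I)" by (simp add: I_eq)

lemma DD_ge_1: "i \<in> I \<Longrightarrow> DD d i \<ge> 1"
  using d_ge_2 I_bounds by (fastforce simp: DD_def)

lemma zero_power_DD: "i \<in> I \<Longrightarrow> (0::'a::semiring_1) ^ DD d i = 0"
  using DD_ge_1 by (simp add: Suc_le_eq zero_power)

lemma sigma_Suc: "\<sigma> (Suc i) = \<sigma> i + 1 / real (d (Suc i))"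
  by (simp add: \<sigma>_def sum.cl_ivl_Suc)

lemma sigma_pos: "1 \<le> i \<Longrightarrow> i \<le> n \<Longrightarrow> \<sigma> i > 0"
  unfolding \<sigma>_def by (rule sum_pos) (use d_pos in auto)

lemma sigma_mono: "i \<le> j \<Longrightarrow> j \<le> n \<Longrightarrow> \<sigma> i \<le> \<sigma> j"
  unfolding \<sigma>_def by (rule sum_mono2) (use d_pos in auto)

lemma nu_eq: "\<nu> = dn / (dn - 1) * \<sigma> (n - 1)"
  by (simp add: \<nu>_def nu_exp_def dn_def \<sigma>_def)

lemma sigma_lt_nu: "i \<in> I \<Longrightarrow> \<sigma> i < \<nu>"
proof -
  assume i: "i \<in> I"
  have "\<sigma> i \<le> \<sigma> (n - 1)" using i by (intro sigma_mono) (auto simp: I_def)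
  also have "\<sigma> (n - 1) < \<sigma> (n - 1) + \<sigma> (n - 1) / (dn - 1)"
    using dn_ge_2 sigma_pos[of "n - 1"] n_ge_3 by simp
  also have "\<dots> = \<nu>" using dn_ge_2 by (simp add: nu_eq field_simps)
  finally show ?thesis .
qed

lemma nu_pos: "\<nu> > 0"
proof -
  have "1 \<in> I" using n_ge_3 by (simp add: I_def)
  then show ?thesis using sigma_lt_nu[of 1] sigma_pos[of 1] n_ge_3 by linarith
qed

lemma c_Suc_eq_powr: "s > 0 \<Longrightarrow> c s (Suc k) = m * s powr \<sigma> (Suc k)"
proof (induction k)
  case 0
  have "real (dmax d n) ^ 2 = real (dmax d n) powr 2" using dmax_pos by (simp add: powr_numeral)
  then have "(real (dmax d n) ^ 2) powr (1 / real (d 1)) = m"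
    by (simp only: powr_powr m_def) simp
  then have "(real (dmax d n) ^ 2 * s) powr (1 / real (d 1)) = m * s powr (1 / real (d 1))"
    using 0 by (simp add: powr_mult)
  then show ?case by (simp add: c_def \<sigma>_def)
next
  case (Suc k)
  then show ?case by (simp add: c_def \<sigma>_def powr_add sum.cl_ivl_Suc)
qed

lemma c_eq_powr: "s > 0 \<Longrightarrow> i \<in> I \<Longrightarrow> c s i = m * s powr \<sigma> i"
  using c_Suc_eq_powr by (cases i) (auto simp: I_def)

lemma c_pos: "s > 0 \<Longrightarrow> i \<in> I \<Longrightarrow> c s i > 0"
  using c_eq_powr m_pos by simp

lemma sum_alternating_D: "(\<Sum>i\<in>I. (-1)^i * D i) = dn - real (d 1)"
proof -
  have "(\<Sum>i\<in>I. (-1)^i * D i) = (\<Sum>i\<in>{1..2*(n div 2)}. (-1)^i * (real (d i) + real (d (Suc i))))"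
    by (simp add: I_eq D_def DD_def)
  also have "\<dots> = real (d (2*(n div 2)+1)) - real (d 1)" by (rule sum_alternating_pairs_telescope)
  finally show ?thesis using odd_n by (simp add: dn_def)
qed

lemma sum_alternating_D_sigma: "(\<Sum>i\<in>I. (-1)^i * D i * \<sigma> i) = dn * \<sigma> (n - 1)"
proof -
  let ?A = "\<lambda>i. real (d i) * \<sigma> i"
  have "(\<Sum>i\<in>I. (-1)^i * D i * \<sigma> i) = (\<Sum>i\<in>I. (-1)^i * (?A i + ?A (Suc i)) - (-1)^i)"
  proof (rule sum.cong[OF refl])
    fix i assume i: "i \<in> I"
    have "real (d (Suc i)) > 0" using I_bounds[OF i] d_pos by auto
    then show "(-1)^i * D i * \<sigma> i = (-1)^i * (?A i + ?A (Suc i)) - (-1)^i"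
      by (simp add: D_def DD_def sigma_Suc field_simps)
  qed
  also have "\<dots> = ?A n - ?A 1"
    using sum_alternating_pairs_telescope[of ?A "n div 2"] sum_neg_one_power_even[of "n div 2"] odd_n
    by (simp add: I_eq sum_subtractf)
  also have "\<dots> = dn * \<sigma> (n - 1)"
    using sigma_Suc[of "n - 1"] n_ge_3 dn_ge_2 d_1_pos by (simp add: \<sigma>_def dn_def field_simps)
  finally show ?thesis .
qed

definition "K s = (\<Prod>i\<in>I. if even i then c s i ^ DD d i else inverse (c s i ^ DD d i))"
definition "\<kappa> = m powr (dn - real (d 1))"

lemma kappa_pos: "\<kappa> > 0" using m_pos by (simp add: \<kappa>_def)

text \<open>The product of the \<open>c_i^(\<plusminus>D_i)\<close> is a pure power of \<open>s\<close>: this is where \<open>\<nu>\<close> comes from.\<close>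

lemma K_eq_powr: "s > 0 \<Longrightarrow> K s = \<kappa> * s powr (\<nu> * (dn - 1))"
proof -
  assume s: "s > 0"
  have factor: "(if even i then c s i ^ DD d i else inverse (c s i ^ DD d i))
      = m powr ((-1)^i * D i) * s powr ((-1)^i * D i * \<sigma> i)" if i: "i \<in> I" for i
  proof -
    have "c s i ^ DD d i = (m * s powr \<sigma> i) powr D i"
      using c_eq_powr[OF s i] c_pos[OF s i] by (simp add: D_def powr_realpow)
    also have "\<dots> = m powr D i * s powr (D i * \<sigma> i)"
      using m_pos s by (simp add: powr_mult powr_powr mult.commute)
    finally show ?thesis by (cases "even i") (simp_all add: powr_minus)
  qed
  have "K s = (\<Prod>i\<in>I. m powr ((-1)^i * D i)) * (\<Prod>i\<in>I. s powr ((-1)^i * D i * \<sigma> i))"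
    unfolding K_def by (simp add: factor prod.distrib cong: prod.cong)
  also have "\<dots> = m powr (\<Sum>i\<in>I. (-1)^i * D i) * s powr (\<Sum>i\<in>I. (-1)^i * D i * \<sigma> i)"
    using m_pos s by (simp add: powr_sum)
  also have "\<dots> = \<kappa> * s powr (\<nu> * (dn - 1))"
    using dn_ge_2 by (simp add: sum_alternating_D sum_alternating_D_sigma \<kappa>_def nu_eq)
  finally show ?thesis .
qed

definition "P s z = (\<Prod>i\<in>I. if even i then z ^ DD d i - c s i ^ DD d i
    else inverse (z ^ DD d i - c s i ^ DD d i))"
definition "f s z = P s z / z ^ d n"
definition "L s z = - dn / z + (\<Sum>i\<in>I. (-1)^i * D i * z ^ (DD d i - 1) / (z ^ DD d i - c s i ^ DD d i))"
definition "Q s z = (\<Prod>i\<in>I. if even i then (z / c s i) ^ DD d i - 1 else inverse ((z / c s i) ^ DD d i - 1))"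

lemma P_eq_K_Q: "s > 0 \<Longrightarrow> P s z = K s * Q s z"
proof -
  assume s: "s > 0"
  have "P s z = (\<Prod>i\<in>I. (if even i then c s i ^ DD d i else inverse (c s i ^ DD d i)) *
      (if even i then (z / c s i) ^ DD d i - 1 else inverse ((z / c s i) ^ DD d i - 1)))"
    unfolding P_def
  proof (rule prod.cong[OF refl])
    fix i assume i: "i \<in> I"
    have "z ^ DD d i - c s i ^ DD d i = c s i ^ DD d i * ((z / c s i) ^ DD d i - 1)"
      using c_pos[OF s i] by (simp add: power_divide field_simps)
    then show "(if even i then z ^ DD d i - c s i ^ DD d i else inverse (z ^ DD d i - c s i ^ DD d i)) =
      (if even i then c s i ^ DD d i else inverse (c s i ^ DD d i)) *
      (if even i then (z / c s i) ^ DD d i - 1 else inverse ((z / c s i) ^ DD d i - 1))"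
      by (simp add: inverse_mult_distrib)
  qed
  then show ?thesis by (simp add: K_def Q_def prod.distrib)
qed

lemma tendsto_c: "i \<in> I \<Longrightarrow> ((\<lambda>s. c s i) \<longlongrightarrow> 0) (at_right 0)"
proof -
  assume i: "i \<in> I"
  have "\<forall>\<^sub>F s in at_right 0. m * s powr \<sigma> i = c s i"
    using eventually_at_right_less by eventually_elim (simp add: c_eq_powr[OF _ i])
  moreover have "((\<lambda>s. m * s powr \<sigma> i) \<longlongrightarrow> m * 0) (at_right 0)"
    by (intro tendsto_intros tendsto_powr_at_right_0) (use i sigma_pos in \<open>auto simp: I_def\<close>)
  ultimately show ?thesis by (simp add: tendsto_cong)
qed

lemma tendsto_scaled_over_c:
  assumes x: "(x \<longlongrightarrow> x\<^sub>0) (at_right 0)" and i: "i \<in> I"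
  shows "((\<lambda>s. x s * s powr \<nu> / c s i) \<longlongrightarrow> 0) (at_right 0)"
proof -
  have "\<forall>\<^sub>F s in at_right 0. x s / m * s powr (\<nu> - \<sigma> i) = x s * s powr \<nu> / c s i"
    using eventually_at_right_less
    by eventually_elim (use m_pos in \<open>simp add: c_eq_powr[OF _ i] powr_diff field_simps\<close>)
  moreover have "((\<lambda>s. x s / m * s powr (\<nu> - \<sigma> i)) \<longlongrightarrow> x\<^sub>0 / m * 0) (at_right 0)"
    by (intro tendsto_intros x tendsto_powr_at_right_0) (use sigma_lt_nu[OF i] m_pos in auto)
  ultimately show ?thesis by (simp add: tendsto_cong)
qed

lemma tendsto_Q_scaled:
  assumes x: "(x \<longlongrightarrow> x\<^sub>0) (at_right 0)"
  shows "((\<lambda>s. Q s (x s * s powr \<nu>)) \<longlongrightarrow> 1) (at_right 0)"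
proof -
  have "((\<lambda>s. if even i then (x s * s powr \<nu> / c s i) ^ DD d i - 1
      else inverse ((x s * s powr \<nu> / c s i) ^ DD d i - 1)) \<longlongrightarrow> -1) (at_right 0)"
    if i: "i \<in> I" for i
  proof -
    have "((\<lambda>s. (x s * s powr \<nu> / c s i) ^ DD d i - 1) \<longlongrightarrow> -1) (at_right 0)"
      using tendsto_diff[OF tendsto_power[OF tendsto_scaled_over_c[OF x i], of "DD d i"] tendsto_const[of 1]]
      by (simp add: zero_power_DD[OF i])
    then show ?thesis by (rule tendsto_alternating_factor) simp
  qed
  then have "((\<lambda>s. Q s (x s * s powr \<nu>)) \<longlongrightarrow> (\<Prod>i\<in>I. -1)) (at_right 0)"
    unfolding Q_def by (rule tendsto_prod)
  then show ?thesis using card_I_even by simp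
qed

lemma tendsto_f_1: "((\<lambda>s. f s 1) \<longlongrightarrow> 1) (at_right 0)"
proof -
  have "((\<lambda>s. if even i then 1 - c s i ^ DD d i else inverse (1 - c s i ^ DD d i)) \<longlongrightarrow> 1) (at_right 0)"
    if i: "i \<in> I" for i
  proof -
    have "((\<lambda>s. 1 - c s i ^ DD d i) \<longlongrightarrow> 1) (at_right 0)"
      using tendsto_diff[OF tendsto_const[of 1] tendsto_power[OF tendsto_c[OF i], of "DD d i"]]
      by (simp add: zero_power_DD[OF i])
    then show ?thesis by (rule tendsto_alternating_factor) simp
  qed
  then have "((\<lambda>s. \<Prod>i\<in>I. if even i then 1 - c s i ^ DD d i else inverse (1 - c s i ^ DD d i))
      \<longlongrightarrow> (\<Prod>i\<in>I. 1)) (at_right 0)"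
    by (rule tendsto_prod)
  then show ?thesis by (simp add: f_def P_def cong: if_cong)
qed

lemma tendsto_L_1: "((\<lambda>s. L s 1) \<longlongrightarrow> - real (d 1)) (at_right 0)"
proof -
  have "((\<lambda>s. L s 1) \<longlongrightarrow> - dn + (\<Sum>i\<in>I. (-1)^i * D i * 1 / (1 - 0 ^ DD d i))) (at_right 0)"
    unfolding L_def by (simp only: power_one, intro tendsto_intros tendsto_c) (auto simp: zero_power_DD)
  moreover have "- dn + (\<Sum>i\<in>I. (-1)^i * D i * 1 / (1 - 0 ^ DD d i)) = - real (d 1)"
    by (simp add: sum_alternating_D zero_power_DD cong: sum.cong)
  ultimately show ?thesis by simp
qed

lemma tendsto_z_f_scaled:
  assumes x: "(x \<longlongrightarrow> x\<^sub>0) (at_right 0)" and x\<^sub>0: "x\<^sub>0 > 0"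
  shows "((\<lambda>s. (x s * s powr \<nu>) * f s (x s * s powr \<nu>)) \<longlongrightarrow> \<kappa> / x\<^sub>0 ^ (d n - 1)) (at_right 0)"
proof -
  have "\<forall>\<^sub>F s in at_right 0. \<kappa> * Q s (x s * s powr \<nu>) / x s ^ (d n - 1) =
          (x s * s powr \<nu>) * f s (x s * s powr \<nu>)"
    using eventually_at_right_less order_tendstoD(1)[OF x x\<^sub>0]
  proof eventually_elim
    case (elim s)
    define z where "z = x s * s powr \<nu>"
    define k where "k = d n - 1"
    have d_n: "d n = Suc k" using dn_ge_2 by (simp add: k_def dn_def)
    have z_k: "z ^ k = x s ^ k * s powr (\<nu> * (dn - 1))"
      using elim by (simp add: z_def k_def power_mult_distrib powr_power real_d_n_minus_1[unfolded One_nat_def] mult.commute)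
    have "z > 0" using elim by (simp add: z_def)
    have "z * f s z = z * (K s * Q s z) / (z * z ^ k)"
      by (simp add: f_def P_eq_K_Q[OF elim(1)] d_n)
    also have "\<dots> = \<kappa> * s powr (\<nu> * (dn - 1)) * Q s z / (x s ^ k * s powr (\<nu> * (dn - 1)))"
      using elim \<open>z > 0\<close> by (simp add: z_k K_eq_powr[OF elim(1)])
    finally have "z * f s z = \<kappa> * Q s z / x s ^ k" using elim by simp
    then show ?case by (simp add: z_def k_def)
  qed
  moreover have "((\<lambda>s. \<kappa> * Q s (x s * s powr \<nu>) / x s ^ (d n - 1)) \<longlongrightarrow> \<kappa> * 1 / x\<^sub>0 ^ (d n - 1)) (at_right 0)"
    by (intro tendsto_intros tendsto_Q_scaled[OF x] x) (use x\<^sub>0 in auto)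
  ultimately show ?thesis by (simp add: tendsto_cong)
qed

lemma z_L_eq:
  assumes s: "s > 0" and z: "z > 0"
  shows "z * L s z = - dn + (\<Sum>i\<in>I. (-1)^i * D i * ((z / c s i) ^ DD d i / ((z / c s i) ^ DD d i - 1)))"
proof -
  have "z * L s z = - dn + (\<Sum>i\<in>I. z * ((-1)^i * D i * z ^ (DD d i - 1) / (z ^ DD d i - c s i ^ DD d i)))"
    unfolding L_def distrib_left sum_distrib_left using z by simp
  also have "\<dots> = - dn + (\<Sum>i\<in>I. (-1)^i * D i * ((z / c s i) ^ DD d i / ((z / c s i) ^ DD d i - 1)))"
  proof (intro arg_cong[where f = "\<lambda>t. - dn + t"] sum.cong[OF refl])
    fix i assume i: "i \<in> I"
    have "z * z ^ (DD d i - 1) = z ^ DD d i" using DD_ge_1[OF i]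
      by (metis Suc_diff_le diff_Suc_1 power_Suc)
    then
    show "z * ((-1)^i * D i * z ^ (DD d i - 1) / (z ^ DD d i - c s i ^ DD d i))
      = (-1)^i * D i * ((z / c s i) ^ DD d i / ((z / c s i) ^ DD d i - 1))"
      using power_divide_fraction_eq[of "c s i" z "DD d i"] c_pos[OF s i] by (simp add: mult_ac)
  qed
  finally show ?thesis .
qed

lemma tendsto_z_L_scaled:
  assumes x: "(x \<longlongrightarrow> x\<^sub>0) (at_right 0)" and x\<^sub>0: "x\<^sub>0 > 0"
  shows "((\<lambda>s. (x s * s powr \<nu>) * L s (x s * s powr \<nu>)) \<longlongrightarrow> - dn) (at_right 0)"
proof -
  have "\<forall>\<^sub>F s in at_right 0. - dn + (\<Sum>i\<in>I. (-1)^i * D i * ((x s * s powr \<nu> / c s i) ^ DD d i /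
            ((x s * s powr \<nu> / c s i) ^ DD d i - 1))) = (x s * s powr \<nu>) * L s (x s * s powr \<nu>)"
    using eventually_at_right_less order_tendstoD(1)[OF x x\<^sub>0]
    by eventually_elim (simp add: z_L_eq)
  moreover have "((\<lambda>s. - dn + (\<Sum>i\<in>I. (-1)^i * D i * ((x s * s powr \<nu> / c s i) ^ DD d i /
            ((x s * s powr \<nu> / c s i) ^ DD d i - 1)))) \<longlongrightarrow>
        - dn + (\<Sum>i\<in>I. (-1)^i * D i * (0 ^ DD d i / (0 ^ DD d i - 1)))) (at_right 0)"
    by (intro tendsto_intros tendsto_scaled_over_c[OF x]) (auto simp: zero_power_DD)
  ultimately show ?thesis by (simp add: tendsto_cong zero_power_DD cong: sum.cong)
qed

definition "Pc s w = (\<Prod>i\<in>I. if even i then w ^ DD d i - complex_of_real (c s i) ^ DD d i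
     else inverse (w ^ DD d i - complex_of_real (c s i) ^ DD d i))"

lemma Rn_eq: "Rn d n s A B = (\<lambda>w. A * (Pc s w / w ^ d n) + B)"
  unfolding Rn_def Pc_def c_def I_def by (rule ext) simp

lemma Pc_of_real: "Pc s (complex_of_real z) = complex_of_real (P s z)"
  unfolding Pc_def P_def of_real_prod by (rule prod.cong[OF refl]) (simp add: of_real_inverse)

lemma Rn_of_real:
  "Rn d n s (complex_of_real A) (complex_of_real B) (complex_of_real z) = complex_of_real (A * f s z + B)"
  by (simp add: Rn_eq Pc_of_real f_def)

lemma Rn_has_derivative_of_real:
  assumes z: "z \<noteq> 0" and nz: "\<forall>i\<in>I. z ^ DD d i \<noteq> c s i ^ DD d i"
  shows "(Rn d n s (complex_of_real A) (complex_of_real B) has_field_derivative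
          complex_of_real (A * (f s z * L s z))) (at (complex_of_real z))"
proof -
  define w where "w = complex_of_real z"
  define \<Sigma> where "\<Sigma> = (\<Sum>i\<in>I. (-1)^i * of_nat (DD d i) * w ^ (DD d i - 1) /
      (w ^ DD d i - complex_of_real (c s i) ^ DD d i))"
  have "\<forall>i\<in>I. w ^ DD d i \<noteq> complex_of_real (c s i) ^ DD d i"
    using nz unfolding w_def by (metis of_real_eq_iff of_real_power)
  then have "(Pc s has_field_derivative Pc s w * \<Sigma>) (at w)"
    unfolding Pc_def \<Sigma>_def by (rule has_field_derivative_alternating_prod)
  moreover have w: "w \<noteq> 0" and "w ^ d n = w * w ^ (d n - 1)"
    using z dn_ge_2 by (simp_all add: w_def dn_def power_Suc[symmetric])
  ultimately have "((\<lambda>w. complex_of_real A * (Pc s w / w ^ d n) + complex_of_real B) has_field_derivative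
      complex_of_real A * (Pc s w / w ^ d n * (- of_nat (d n) / w + \<Sigma>))) (at w)"
    by (auto intro!: derivative_eq_intros simp: field_simps)
  moreover have "complex_of_real A * (Pc s w / w ^ d n * (- of_nat (d n) / w + \<Sigma>))
      = complex_of_real (A * (f s z * L s z))"
    by (simp add: \<Sigma>_def w_def Pc_of_real f_def L_def dn_def D_def)
  ultimately show ?thesis unfolding Rn_eq w_def by simp
qed

definition "U s = {z. 0 < z \<and> (\<forall>i\<in>I. z < c s i)}"

lemma power_DD_minus_c_nonzero:
  "s > 0 \<Longrightarrow> i \<in> I \<Longrightarrow> 0 \<le> z \<Longrightarrow> z < c s i \<Longrightarrow> z ^ DD d i - c s i ^ DD d i \<noteq> 0"
  using DD_ge_1[of i] power_strict_mono[of z "c s i" "DD d i"] by auto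

lemma continuous_on_f: "s > 0 \<Longrightarrow> continuous_on (U s) (f s)"
proof -
  assume s: "s > 0"
  have "continuous_on (U s) (\<lambda>z. if even i then z ^ DD d i - c s i ^ DD d i
      else inverse (z ^ DD d i - c s i ^ DD d i))" if i: "i \<in> I" for i
  proof (cases "even i")
    case False
    have "continuous_on (U s) (\<lambda>z. inverse (z ^ DD d i - c s i ^ DD d i))"
      by (intro continuous_intros) (use power_DD_minus_c_nonzero[OF s i] i in \<open>auto simp: U_def\<close>)
    then show ?thesis using False by simp
  qed (simp add: continuous_intros)
  then have "continuous_on (U s) (\<lambda>z. P s z / z ^ d n)"
    unfolding P_def by (intro continuous_intros) (auto simp: U_def)
  then show ?thesis by (simp add: f_def[abs_def])
qed

lemma continuous_on_L: "s > 0 \<Longrightarrow> continuous_on (U s) (L s)"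
  unfolding L_def[abs_def]
  by (intro continuous_intros) (use power_DD_minus_c_nonzero in \<open>auto simp: U_def\<close>)

definition "G s z = (1 - z)^2 * (f s 1 * L s 1) * (f s z * L s z) - (f s z - f s 1)^2"

lemma continuous_on_G: "s > 0 \<Longrightarrow> continuous_on (U s) (G s)"
  unfolding G_def[abs_def] by (intro continuous_intros continuous_on_f continuous_on_L)

lemma tendsto_scaled_zero: "(x \<longlongrightarrow> x\<^sub>0) (at_right 0) \<Longrightarrow> ((\<lambda>s. x s * s powr \<nu>) \<longlongrightarrow> 0) (at_right 0)"
  using tendsto_mult[OF _ tendsto_powr_at_right_0[OF nu_pos], of x x\<^sub>0] by simp

lemma eventually_f_scaled_nonzero:
  assumes x: "(x \<longlongrightarrow> x\<^sub>0) (at_right 0)" and x\<^sub>0: "x\<^sub>0 > 0"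
  shows "\<forall>\<^sub>F s in at_right 0. f s (x s * s powr \<nu>) \<noteq> 0"
proof -
  have "\<forall>\<^sub>F s in at_right 0. (x s * s powr \<nu>) * f s (x s * s powr \<nu>) \<noteq> 0"
    by (rule tendsto_imp_eventually_ne[OF tendsto_z_f_scaled[OF x x\<^sub>0]]) (use kappa_pos x\<^sub>0 in simp)
  then show ?thesis by eventually_elim auto
qed

definition "h x = real (d 1) * dn * x ^ (d n - 1) / \<kappa> - 1"

lemma tendsto_G_scaled:
  assumes x: "(x \<longlongrightarrow> x\<^sub>0) (at_right 0)" and x\<^sub>0: "x\<^sub>0 > 0"
  shows "((\<lambda>s. G s (x s * s powr \<nu>) / (f s (x s * s powr \<nu>))^2) \<longlongrightarrow> h x\<^sub>0) (at_right 0)"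
proof -
  let ?z = "\<lambda>s. x s * s powr \<nu>"
  have "\<forall>\<^sub>F s in at_right 0.
      (1 - ?z s)^2 * (f s 1 * L s 1) * (?z s * L s (?z s)) / (?z s * f s (?z s))
      - (1 - f s 1 * ?z s / (?z s * f s (?z s)))^2
      = G s (?z s) / (f s (?z s))^2"
    using eventually_at_right_less order_tendstoD(1)[OF x x\<^sub>0] eventually_f_scaled_nonzero[OF x x\<^sub>0]
  proof eventually_elim
    case (elim s)
    then have "?z s \<noteq> 0" and "f s (?z s) \<noteq> 0" by simp_all
    then show ?case by (simp add: G_def field_simps power2_eq_square)
  qed
  moreover have "((\<lambda>s. (1 - ?z s)^2 * (f s 1 * L s 1) * (?z s * L s (?z s)) / (?z s * f s (?z s))
      - (1 - f s 1 * ?z s / (?z s * f s (?z s)))^2)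
      \<longlongrightarrow> (1 - 0)^2 * (1 * (- real (d 1))) * (- dn) / (\<kappa> / x\<^sub>0 ^ (d n - 1))
         - (1 - 1 * 0 / (\<kappa> / x\<^sub>0 ^ (d n - 1)))^2) (at_right 0)"
    by (intro tendsto_intros tendsto_scaled_zero[OF x] tendsto_f_1 tendsto_L_1
        tendsto_z_L_scaled[OF x x\<^sub>0] tendsto_z_f_scaled[OF x x\<^sub>0])
       (use kappa_pos x\<^sub>0 in auto)
  ultimately show ?thesis by (simp add: tendsto_cong h_def)
qed

lemma eventually_G_scaled_pos:
  assumes "x > 0" "h x > 0"
  shows "\<forall>\<^sub>F s in at_right 0. G s (x * s powr \<nu>) > 0"
  using order_tendstoD(1)[OF tendsto_G_scaled[OF tendsto_const assms(1)] assms(2)]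
    eventually_f_scaled_nonzero[OF tendsto_const assms(1)]
  by eventually_elim (simp add: zero_less_divide_iff)

lemma eventually_G_scaled_neg:
  assumes "x > 0" "h x < 0"
  shows "\<forall>\<^sub>F s in at_right 0. G s (x * s powr \<nu>) < 0"
  using order_tendstoD(2)[OF tendsto_G_scaled[OF tendsto_const assms(1)] assms(2)]
    eventually_f_scaled_nonzero[OF tendsto_const assms(1)]
  by eventually_elim (simp add: divide_less_0_iff)

definition "a = (\<kappa> / (real (d 1) * dn)) powr (1 / (dn - 1))"

lemma a_pos: "a > 0" using kappa_pos d_1_pos dn_ge_2 by (simp add: a_def)

lemma a_power: "a ^ (d n - 1) = \<kappa> / (real (d 1) * dn)"
proof -
  have "a ^ (d n - 1) = (\<kappa> / (real (d 1) * dn)) powr (1 / (dn - 1) * real (d n - 1))"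
    using a_pos by (simp add: a_def powr_realpow[symmetric] powr_powr)
  also have "\<dots> = \<kappa> / (real (d 1) * dn)"
    using real_d_n_minus_1 dn_ge_2 kappa_pos d_1_pos by simp
  finally show ?thesis .
qed

lemma h_a: "h a = 0" using a_power d_1_pos dn_ge_2 kappa_pos by (simp add: h_def)

lemma h_strict_mono: "0 < x \<Longrightarrow> x < y \<Longrightarrow> h x < h y"
proof -
  assume "0 < x" "x < y"
  then have "x ^ (d n - 1) < y ^ (d n - 1)"
    using dn_ge_2 by (intro power_strict_mono) (auto simp: dn_def)
  then show "h x < h y"
    using d_1_pos dn_ge_2 kappa_pos by (simp add: h_def divide_strict_right_mono)
qed

lemma eventually_scaled_interval_in_U:
  "\<forall>\<^sub>F s in at_right 0. s > 0 \<and> (\<forall>x\<in>{a/2..2*a}. x * s powr \<nu> \<in> U s)"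
proof -
  have "\<forall>\<^sub>F s in at_right 0. 2 * a * s powr \<nu> / c s i < 1" if "i \<in> I" for i
    using order_tendstoD(2)[OF tendsto_scaled_over_c[OF tendsto_const that], of 1] by simp
  then have "\<forall>\<^sub>F s in at_right 0. \<forall>i\<in>I. 2 * a * s powr \<nu> / c s i < 1"
    by (simp add: I_def eventually_ball_finite)
  with eventually_at_right_less show ?thesis
  proof eventually_elim
    case (elim s)
    have "x * s powr \<nu> < c s i" if "x \<in> {a/2..2*a}" "i \<in> I" for x i
    proof -
      have "x * s powr \<nu> \<le> 2 * a * s powr \<nu>" using that elim by (intro mult_right_mono) auto
      also have "\<dots> < c s i" using elim that c_pos[OF _ that(2)] by (auto simp: divide_less_eq)
      finally show ?thesis .
    qed
    then show ?case using elim a_pos by (auto simp: U_def)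
  qed
qed

definition "Z s = {x \<in> {a/2..2*a}. G s (x * s powr \<nu>) = 0}"

text \<open>The zero of \<open>G s (x s^\<nu>)\<close> nearest to \<open>a\<close>; the fallback value \<open>a\<close> is never
  used for small \<open>s\<close>.\<close>

definition "x_root s = (if Z s = {} then a else SOME x. x \<in> Z s \<and> (\<forall>y\<in>Z s. dist a x \<le> dist a y))"

lemma eventually_x_root_near_a:
  assumes e: "0 < e" "e \<le> a / 2"
  shows "\<forall>\<^sub>F s in at_right 0. x_root s \<in> Z s \<and> \<bar>x_root s - a\<bar> \<le> e"
proof -
  have "\<forall>\<^sub>F s in at_right 0. G s ((a - e) * s powr \<nu>) < 0"
    using e a_pos h_strict_mono[of "a - e" a] h_a by (intro eventually_G_scaled_neg) auto
  moreover have "\<forall>\<^sub>F s in at_right 0. G s ((a + e) * s powr \<nu>) > 0"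
    using e a_pos h_strict_mono[of a "a + e"] h_a by (intro eventually_G_scaled_pos) auto
  ultimately show ?thesis using eventually_scaled_interval_in_U
  proof eventually_elim
    case (elim s)
    have cont: "continuous_on {a/2..2*a} (\<lambda>x. G s (x * s powr \<nu>))"
      by (rule continuous_on_compose2[OF continuous_on_G]) (use elim(3) in \<open>auto intro!: continuous_intros\<close>)
    have sub: "{a - e..a + e} \<subseteq> {a/2..2*a}" using e by auto
    obtain y where y: "a - e \<le> y" "y \<le> a + e" "G s (y * s powr \<nu>) = 0"
      using IVT'[of "\<lambda>x. G s (x * s powr \<nu>)" "a - e" 0 "a + e"] elim(1,2) e
        continuous_on_subset[OF cont sub] by force
    then have y_Z: "y \<in> Z s" using sub by (auto simp: Z_def)
    have "closed (Z s)" unfolding Z_def by (rule continuous_closed_preimage_constant[OF cont]) simp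
    moreover have "Z s \<noteq> {}" using y_Z by auto
    ultimately obtain x where "x \<in> Z s" "\<And>y. y \<in> Z s \<Longrightarrow> dist a x \<le> dist a y"
      by (rule distance_attains_inf[where a = a]) blast
    then have "\<exists>x. x \<in> Z s \<and> (\<forall>y\<in>Z s. dist a x \<le> dist a y)" by blast
    from someI_ex[OF this] have "x_root s \<in> Z s \<and> (\<forall>y\<in>Z s. dist a (x_root s) \<le> dist a y)"
      using \<open>Z s \<noteq> {}\<close> by (simp add: x_root_def)
    then show ?case using y y_Z by (force simp: dist_real_def)
  qed
qed

lemma tendsto_x_root: "(x_root \<longlongrightarrow> a) (at_right 0)"
proof (rule tendstoI)
  fix e :: real assume "e > 0"
  then have "\<forall>\<^sub>F s in at_right 0. x_root s \<in> Z s \<and> \<bar>x_root s - a\<bar> \<le> min (e/2) (a/2)"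
    using a_pos by (intro eventually_x_root_near_a) auto
  then show "\<forall>\<^sub>F s in at_right 0. dist (x_root s) a < e"
    by eventually_elim (use \<open>e > 0\<close> in \<open>auto simp: dist_real_def\<close>)
qed

lemma mu_const_eq: "mu_const d n = a / (real (d 1) * dn)"
proof -
  define p where "p = real (d 1) * dn"
  have p: "p > 0" using d_1_pos dn_ge_2 by (simp add: p_def)
  have "a / p = \<kappa> powr (1 / (dn - 1)) / (p powr (1 / (dn - 1)) * p powr 1)"
    using p kappa_pos by (simp add: a_def p_def powr_divide)
  also have "p powr (1 / (dn - 1)) * p powr 1 = p powr (dn / (dn - 1))"
  proof -
    have "1 / (dn - 1) + 1 = dn / (dn - 1)" using dn_ge_2 by (simp add: field_simps)
    then show ?thesis by (simp only: powr_add[symmetric])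
  qed
  also have "\<kappa> powr (1 / (dn - 1)) / p powr (dn / (dn - 1)) = \<kappa> powr (1 / (dn - 1)) * p powr (- dn / (dn - 1))"
    by (simp add: powr_minus divide_inverse)
  also have "\<kappa> powr (1 / (dn - 1)) = real (dmax d n) powr (2 * (dn - real (d 1)) / (real (d 1) * (dn - 1)))"
    using dmax_pos by (simp add: \<kappa>_def m_def powr_powr)
  finally show ?thesis by (simp add: mu_const_def p_def dn_def mult.commute)
qed

definition "z\<^sub>0 s = x_root s * s powr \<nu>"
definition "S s = (1 - z\<^sub>0 s) / (f s (z\<^sub>0 s) - f s 1)"
definition "T s = z\<^sub>0 s - S s * f s 1"

lemma tendsto_scaled_gap:
  "((\<lambda>s. s powr \<nu> * (f s (z\<^sub>0 s) - f s 1)) \<longlongrightarrow> \<kappa> / a ^ (d n - 1) / a) (at_right 0)"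
proof -
  have "\<forall>\<^sub>F s in at_right 0. z\<^sub>0 s * f s (z\<^sub>0 s) / x_root s - s powr \<nu> * f s 1
      = s powr \<nu> * (f s (z\<^sub>0 s) - f s 1)"
    using order_tendstoD(1)[OF tendsto_x_root a_pos]
    by eventually_elim (simp add: z\<^sub>0_def field_simps)
  moreover have "((\<lambda>s. z\<^sub>0 s * f s (z\<^sub>0 s) / x_root s - s powr \<nu> * f s 1)
      \<longlongrightarrow> \<kappa> / a ^ (d n - 1) / a - 0 * 1) (at_right 0)"
    unfolding z\<^sub>0_def
    by (intro tendsto_intros tendsto_z_f_scaled tendsto_x_root a_pos tendsto_powr_at_right_0 nu_pos
        tendsto_f_1) (use a_pos in simp)
  ultimately show ?thesis by (simp add: tendsto_cong)
qed

lemma tendsto_S_scaled: "((\<lambda>s. S s / s powr \<nu>) \<longlongrightarrow> mu_const d n) (at_right 0)"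
proof -
  have "\<forall>\<^sub>F s in at_right 0. (1 - z\<^sub>0 s) / (s powr \<nu> * (f s (z\<^sub>0 s) - f s 1)) = S s / s powr \<nu>"
    by (simp add: S_def)
  moreover have "((\<lambda>s. (1 - z\<^sub>0 s) / (s powr \<nu> * (f s (z\<^sub>0 s) - f s 1)))
      \<longlongrightarrow> (1 - 0) / (\<kappa> / a ^ (d n - 1) / a)) (at_right 0)"
    unfolding z\<^sub>0_def[abs_def]
    by (intro tendsto_intros tendsto_scaled_gap[unfolded z\<^sub>0_def] tendsto_scaled_zero[OF tendsto_x_root])
      (use kappa_pos a_pos in simp)
  moreover have "(1 - 0) / (\<kappa> / a ^ (d n - 1) / a) = mu_const d n"
    using kappa_pos a_pos d_1_pos dn_ge_2 by (simp add: mu_const_eq a_power[unfolded One_nat_def])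
  ultimately show ?thesis by (simp add: tendsto_cong)
qed

lemma tendsto_z\<^sub>0_scaled: "((\<lambda>s. z\<^sub>0 s / s powr \<nu>) \<longlongrightarrow> real (d 1) * real (d n) * mu_const d n) (at_right 0)"
proof -
  have "\<forall>\<^sub>F s in at_right 0. x_root s = z\<^sub>0 s / s powr \<nu>"
    using eventually_at_right_less by eventually_elim (simp add: z\<^sub>0_def)
  moreover have "real (d 1) * real (d n) * mu_const d n = a"
    using d_1_pos dn_ge_2 by (simp add: mu_const_eq dn_def)
  ultimately show ?thesis using tendsto_x_root by (simp add: tendsto_cong)
qed

lemma tendsto_T_scaled:
  "((\<lambda>s. T s / s powr \<nu>) \<longlongrightarrow> (real (d 1) * real (d n) - 1) * mu_const d n) (at_right 0)"
proof -
  have "((\<lambda>s. z\<^sub>0 s / s powr \<nu> - S s / s powr \<nu> * f s 1) \<longlongrightarrow>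
      real (d 1) * real (d n) * mu_const d n - mu_const d n * 1) (at_right 0)"
    by (intro tendsto_intros tendsto_z\<^sub>0_scaled tendsto_S_scaled tendsto_f_1)
  then show ?thesis by (simp add: T_def diff_divide_distrib algebra_simps)
qed

lemma eventually_parabolic_orbit: "\<forall>\<^sub>F s in at_right 0.
    Rn d n s (complex_of_real (S s)) (complex_of_real (T s)) 1 = complex_of_real (z\<^sub>0 s) \<and>
    Rn d n s (complex_of_real (S s)) (complex_of_real (T s)) (complex_of_real (z\<^sub>0 s)) = 1 \<and>
    (\<exists>a b. (Rn d n s (complex_of_real (S s)) (complex_of_real (T s)) has_field_derivative a) (at 1) \<and>
      (Rn d n s (complex_of_real (S s)) (complex_of_real (T s)) has_field_derivative b)
        (at (complex_of_real (z\<^sub>0 s))) \<and> a * b = 1)"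
proof -
  have "\<forall>\<^sub>F s in at_right 0. c s i < 1" if "i \<in> I" for i
    using order_tendstoD(2)[OF tendsto_c[OF that], of 1] by simp
  then have c_lt_1: "\<forall>\<^sub>F s in at_right 0. \<forall>i\<in>I. c s i < 1"
    by (simp add: I_def eventually_ball_finite)
  have gap_nonzero: "\<forall>\<^sub>F s in at_right 0. s powr \<nu> * (f s (z\<^sub>0 s) - f s 1) \<noteq> 0"
    by (rule tendsto_imp_eventually_ne[OF tendsto_scaled_gap]) (use kappa_pos a_pos in simp)
  have x_root_near_a: "\<forall>\<^sub>F s in at_right 0. x_root s \<in> Z s \<and> \<bar>x_root s - a\<bar> \<le> a / 2"
    by (rule eventually_x_root_near_a) (use a_pos in auto)
  show ?thesis using eventually_scaled_interval_in_U c_lt_1 x_root_near_a gap_nonzero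
  proof eventually_elim
    case (elim s)
    then have s: "s > 0" and gap: "f s (z\<^sub>0 s) - f s 1 \<noteq> 0" by auto
    have "x_root s \<in> Z s" using elim by auto
    then have z\<^sub>0_U: "z\<^sub>0 s \<in> U s" and G_z\<^sub>0: "G s (z\<^sub>0 s) = 0"
      using elim(1) by (auto simp: Z_def z\<^sub>0_def)
    have "S s * f s (z\<^sub>0 s) + T s = S s * (f s (z\<^sub>0 s) - f s 1) + z\<^sub>0 s"
      by (simp add: T_def algebra_simps)
    also have "S s * (f s (z\<^sub>0 s) - f s 1) = 1 - z\<^sub>0 s" using gap by (simp add: S_def)
    finally have orbit: "S s * f s 1 + T s = z\<^sub>0 s" "S s * f s (z\<^sub>0 s) + T s = 1"
      by (simp_all add: T_def)
    have "c s i ^ DD d i < 1" if "i \<in> I" for i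
      using elim(2) that c_pos[OF s that] DD_ge_1[OF that] by (intro power_less_one_iff[THEN iffD2]) auto
    then have deriv_1: "(Rn d n s (complex_of_real (S s)) (complex_of_real (T s)) has_field_derivative
        complex_of_real (S s * (f s 1 * L s 1))) (at 1)"
      using Rn_has_derivative_of_real[of 1 s "S s" "T s"] by fastforce
    have deriv_z\<^sub>0: "(Rn d n s (complex_of_real (S s)) (complex_of_real (T s)) has_field_derivative
        complex_of_real (S s * (f s (z\<^sub>0 s) * L s (z\<^sub>0 s)))) (at (complex_of_real (z\<^sub>0 s)))"
      using z\<^sub>0_U power_DD_minus_c_nonzero[OF s]
      by (intro Rn_has_derivative_of_real) (auto simp: U_def)
    have "S s * (f s 1 * L s 1) * (S s * (f s (z\<^sub>0 s) * L s (z\<^sub>0 s))) = 1"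
      unfolding S_def
      by (rule square_ratio_product_eq_one[OF gap]) (use G_z\<^sub>0 in \<open>simp add: G_def\<close>)
    then have "complex_of_real (S s * (f s 1 * L s 1)) * complex_of_real (S s * (f s (z\<^sub>0 s) * L s (z\<^sub>0 s))) = 1"
      by (simp flip: of_real_mult)
    moreover have "Rn d n s (complex_of_real (S s)) (complex_of_real (T s)) 1 = complex_of_real (z\<^sub>0 s)"
      using Rn_of_real[of s "S s" "T s" 1] orbit(1) by simp
    moreover have "Rn d n s (complex_of_real (S s)) (complex_of_real (T s)) (complex_of_real (z\<^sub>0 s)) = 1"
      using Rn_of_real[of s "S s" "T s" "z\<^sub>0 s"] orbit(2) by simp
    ultimately show ?case using deriv_1 deriv_z\<^sub>0 by blast
  qed
qed

end

theorem lemma4p1: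
  fixes n :: nat and d :: "nat \<Rightarrow> nat"
  assumes "n \<ge> 3" and "odd n"
    and "\<forall>i\<in>{1..n}. d i > 0"
    and "(\<Sum>i=1..n. 1 / real (d i)) < 1"
  shows "\<exists>S T z0 :: real \<Rightarrow> complex.
     (\<forall>\<^sub>F s in at_right 0.
        Rn d n s (S s) (T s) 1 = z0 s \<and>
        Rn d n s (S s) (T s) (z0 s) = 1 \<and>
        (\<exists>a b. (Rn d n s (S s) (T s) has_field_derivative a) (at 1) \<and>
               (Rn d n s (S s) (T s) has_field_derivative b) (at (z0 s)) \<and>
               a * b = 1)) \<and>
     ((\<lambda>s. S s / complex_of_real (s powr nu_exp d n)) \<longlongrightarrow> complex_of_real (mu_const d n)) (at_right 0) \<and>
     ((\<lambda>s. T s / complex_of_real (s powr nu_exp d n))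
        \<longlongrightarrow> complex_of_real ((real (d 1) * real (d n) - 1) * mu_const d n)) (at_right 0) \<and>
     ((\<lambda>s. z0 s / complex_of_real (s powr nu_exp d n))
        \<longlongrightarrow> complex_of_real (real (d 1) * real (d n) * mu_const d n)) (at_right 0)"
proof -
  interpret parabolic_orbit_setup d n by unfold_locales (use assms in auto)
  have of_real_limit: "((\<lambda>s. complex_of_real (g s) / complex_of_real (s powr nu_exp d n))
      \<longlongrightarrow> complex_of_real l) (at_right 0)"
    if "((\<lambda>s. g s / s powr \<nu>) \<longlongrightarrow> l) (at_right 0)" for g l
    using tendsto_of_real[OF that, where 'a = complex] by (simp add: \<nu>_def)
  show ?thesis
    by (intro exI[of _ "\<lambda>s. complex_of_real (S s)"] exI[of _ "\<lambda>s. complex_of_real (T s)"]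
        exI[of _ "\<lambda>s. complex_of_real (z\<^sub>0 s)"] conjI eventually_parabolic_orbit of_real_limit
        tendsto_S_scaled tendsto_T_scaled tendsto_z\<^sub>0_scaled)
qed

end
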